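(* Let $J\subseteq\mathbb{R}$ be an interval, $f:J\to\mathbb{R}$ convex, $a,b\in J$, and $\nu\in[0,1]$. Put $r=\min\{\nu,1-\nu\}$, $R=\max\{\nu,1-\nu\}$ and $$\Phi_f(\nu):=\int_0^1\left(\frac{f\big(a\nabla_{\nu\lambda}b\big)+f\big(b\nabla_{(1-\nu)\lambda}a\big)}{2}-f\Big(a\nabla_{\frac{1+\lambda(2\nu-1)}{2}}b\Big)\right)d\lambda .$$ Then $$2r\,\Phi_f(\nu)\le \mathfrak C_{f,\nu}(a,b)-f\big(a\nabla_\nu b\big)\le 2R\,\Phi_f(\nu).$$
   Context: For real $x,y$ and $\mu\in[0,1]$, $x\nabla_\mu y:=(1-\mu)x+\mu y$. For $f$ convex on an interval containing $a,b$ and $\nu\in[0,1]$, $$\mathfrak C_{f,\nu}(a,b):=(1-\nu)\int_0^1 f\big(a\nabla_{\nu\lambda}b\big)\,d\lambda+\nu\int_0^1 f\big(b\nabla_{(1-\nu)\lambda}a\big)\,d\lambda .$$ *)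

theory Defs
  imports "HOL-Analysis.Analysis"
begin

text \<open>Weighted arithmetic mean: x nabla_mu y = (1 - mu) x + mu y.\<close>
definition wam :: "real \<Rightarrow> real \<Rightarrow> real \<Rightarrow> real" where
  "wam x \<mu> y = (1 - \<mu>) * x + \<mu> * y"

definition Cfrak :: "(real \<Rightarrow> real) \<Rightarrow> real \<Rightarrow> real \<Rightarrow> real \<Rightarrow> real" where
  "Cfrak f \<nu> a b =
     (1 - \<nu>) * integral {0..1} (\<lambda>t. f (wam a (\<nu> * t) b))
     + \<nu> * integral {0..1} (\<lambda>t. f (wam b ((1 - \<nu>) * t) a))"

definition Phi :: "(real \<Rightarrow> real) \<Rightarrow> real \<Rightarrow> real \<Rightarrow> real \<Rightarrow> real" where
  "Phi f \<nu> a b = integral {0..1} (\<lambda>t.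
      (f (wam a (\<nu> * t) b) + f (wam b ((1 - \<nu>) * t) a)) / 2
      - f (wam a ((1 + t * (2 * \<nu> - 1)) / 2) b))"

end

theory Submission
  imports Defs
begin

text \<open>For fixed \<open>\<lambda>\<close> put \<open>P = a\<nabla>\<^bsub>\<nu>\<lambda>\<^esub>b\<close> and \<open>Q = b\<nabla>\<^bsub>(1-\<nu>)\<lambda>\<^esub>a\<close>. Then \<open>(1-\<nu>)P + \<nu>Q = a\<nabla>\<^sub>\<nu>b\<close> and
  \<open>(P+Q)/2 = a\<nabla>\<^bsub>(1+\<lambda>(2\<nu>-1))/2\<^esub>b\<close>, so the integrand of \<open>\<CC>\<^sub>f\<^sub>,\<^sub>\<nu>(a,b) - f(a\<nabla>\<^sub>\<nu>b)\<close> is the Jensen gap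
  of \<open>f\<close> at \<open>P, Q\<close> with weight \<open>\<nu>\<close>, and that of \<open>\<Phi>\<^sub>f(\<nu>)\<close> is the midpoint gap. The refinement
  \<open>2r\<close> (midpoint gap) \<open>\<le>\<close> Jensen gap \<open>\<le> 2R\<close> (midpoint gap) of Jensen's inequality holds
  pointwise, and integrating it over \<open>\<lambda> \<in> [0,1]\<close> gives the theorem; all integrands are
  convex functions on \<open>[0,1]\<close>, hence integrable.\<close>

lemma wam_mem_convex:
  assumes "convex S" "x \<in> S" "y \<in> S" "0 \<le> t" "t \<le> 1"
  shows "wam x t y \<in> S"
  using convexD[OF assms(1-3), of "1 - t" t] assms(4,5) by (simp add: wam_def)

lemma convex_on_comp_wam:
  assumes f: "convex_on S f" and "x \<in> S" "y \<in> S"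
  shows "convex_on {0..1} (\<lambda>t. f (wam x t y))"
proof (rule convex_onI)
  fix u s t :: real
  assume u: "0 < u" "u < 1" and s: "s \<in> {0..1}" and t: "t \<in> {0..1}"
  have S: "convex S" using f by (rule convex_on_imp_convex)
  have "wam x ((1 - u) *\<^sub>R s + u *\<^sub>R t) y = (1 - u) *\<^sub>R wam x s y + u *\<^sub>R wam x t y"
    by (simp add: wam_def algebra_simps)
  then show "f (wam x ((1 - u) *\<^sub>R s + u *\<^sub>R t) y) \<le> (1 - u) * f (wam x s y) + u * f (wam x t y)"
    using convex_onD[OF f, of u] u s t wam_mem_convex[OF S \<open>x \<in> S\<close> \<open>y \<in> S\<close>] by simp
qed simp

lemma convex_on_integrable_on_Icc:
  fixes h :: "real \<Rightarrow> real"
  assumes h: "convex_on {a..b} h"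
  shows "h integrable_on {a..b}"
proof -
  define B where "B = max (h a) (h b) + 2 * \<bar>h ((a + b) / 2)\<bar>"
  have bound: "\<bar>h t\<bar> \<le> B" if "t \<in> {a..b}" for t
    using convex_bounds_lemma[of "(a + b) / 2" "(b - a) / 2" h "max (h a) (h b)" t]
      h that convex_on_le_max[OF h] unfolding B_def atLeastAtMost_eq_cball[symmetric] by blast
  have "continuous_on {a<..<b} h"
    by (rule convex_on_continuous) (auto intro: convex_on_subset[OF h])
  then have "h integrable_on {a<..<b}"
  proof (rule measurable_bounded_by_integrable_imp_integrable_real[OF
        continuous_imp_measurable_on_sets_lebesgue])
    show "(\<lambda>_. B) integrable_on {a<..<b}"
      using integrable_const_ivl integrable_on_Icc_iff_Ioo by blast
  qed (use bound in auto)
  then show ?thesis by (simp add: integrable_on_Icc_iff_Ioo)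
qed

lemma convex_on_integrable_on_wam:
  assumes "convex_on S f" "x \<in> S" "y \<in> S"
  shows "(\<lambda>t. f (wam x t y)) integrable_on {0..1}"
  using convex_on_integrable_on_Icc[OF convex_on_comp_wam[OF assms]] .

lemma convex_on_refined_jensen_le_half:
  fixes f :: "real \<Rightarrow> real"
  assumes f: "convex_on S f" and x: "x \<in> S" and y: "y \<in> S" and \<nu>: "0 \<le> \<nu>" "\<nu> \<le> 1/2"
  defines "m \<equiv> (x + y) / 2" and "z \<equiv> (1 - \<nu>) * x + \<nu> * y"
  shows "2 * \<nu> * ((f x + f y) / 2 - f m) \<le> (1 - \<nu>) * f x + \<nu> * f y - f z
    \<and> (1 - \<nu>) * f x + \<nu> * f y - f z \<le> 2 * (1 - \<nu>) * ((f x + f y) / 2 - f m)"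
proof -
  have S: "convex S" using f by (rule convex_on_imp_convex)
  have m: "m \<in> S" and z: "z \<in> S"
    using convexD[OF S x y, of "1/2" "1/2"] convexD[OF S x y, of "1 - \<nu>" \<nu>] \<nu>
    by (auto simp: m_def z_def add_divide_distrib)
  have "z = (1 - 2 * \<nu>) *\<^sub>R x + (2 * \<nu>) *\<^sub>R m"
    by (simp add: m_def z_def algebra_simps)
  then have lower: "f z \<le> (1 - 2 * \<nu>) * f x + 2 * \<nu> * f m"
    using convex_onD[OF f, of "2 * \<nu>" x m] x m \<nu> by simp
  define \<alpha> where "\<alpha> = 1 / (2 * (1 - \<nu>))"
  have half: "\<alpha> * (1 - \<nu>) = 1/2"
    using \<nu> by (simp add: \<alpha>_def)
  have "(1 - \<alpha>) *\<^sub>R y + \<alpha> *\<^sub>R z = y + (\<alpha> * (1 - \<nu>)) * (x - y)"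
    by (simp add: z_def algebra_simps)
  also have "\<dots> = m"
    unfolding half by (simp add: m_def field_simps)
  finally have "m = (1 - \<alpha>) *\<^sub>R y + \<alpha> *\<^sub>R z" ..
  moreover have "0 \<le> \<alpha>" "\<alpha> \<le> 1"
    using \<nu> by (auto simp: \<alpha>_def field_simps)
  ultimately have "f m \<le> (1 - \<alpha>) * f y + \<alpha> * f z"
    using convex_onD[OF f, of \<alpha> y z] y z by simp
  then have "2 * (1 - \<nu>) * f m \<le> 2 * (1 - \<nu>) * ((1 - \<alpha>) * f y + \<alpha> * f z)"
    using \<nu> by (intro mult_left_mono) auto
  also have "\<dots> = 2 * (1 - \<nu>) * f y - 2 * (\<alpha> * (1 - \<nu>)) * f y + 2 * (\<alpha> * (1 - \<nu>)) * f z"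
    by (simp add: algebra_simps)
  also have "\<dots> = (1 - 2 * \<nu>) * f y + f z"
    unfolding half by (simp add: algebra_simps)
  finally have upper: "2 * (1 - \<nu>) * f m \<le> (1 - 2 * \<nu>) * f y + f z" .
  from lower upper show ?thesis by (simp add: field_simps)
qed

lemma convex_on_refined_jensen:
  fixes f :: "real \<Rightarrow> real"
  assumes f: "convex_on S f" and x: "x \<in> S" and y: "y \<in> S" and \<nu>: "0 \<le> \<nu>" "\<nu> \<le> 1"
  defines "D \<equiv> (1 - \<nu>) * f x + \<nu> * f y - f ((1 - \<nu>) * x + \<nu> * y)"
    and "M \<equiv> (f x + f y) / 2 - f ((x + y) / 2)"
  shows "2 * min \<nu> (1 - \<nu>) * M \<le> D \<and> D \<le> 2 * max \<nu> (1 - \<nu>) * M"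
proof (cases "\<nu> \<le> 1/2")
  case True
  then show ?thesis
    using convex_on_refined_jensen_le_half[OF f x y \<nu>(1)] by (simp add: D_def M_def min_def max_def)
next
  case False
  then show ?thesis
    using convex_on_refined_jensen_le_half[OF f y x, of "1 - \<nu>"] \<nu>
    by (simp add: D_def M_def min_def max_def algebra_simps)
qed

lemma Cfrak_integrand_bounds:
  fixes f :: "real \<Rightarrow> real"
  assumes f: "convex_on J f" and "a \<in> J" "b \<in> J" and \<nu>: "0 \<le> \<nu>" "\<nu> \<le> 1" and t: "0 \<le> t" "t \<le> 1"
  defines "P \<equiv> wam a (\<nu> * t) b" and "Q \<equiv> wam b ((1 - \<nu>) * t) a"
  defines "M \<equiv> (f P + f Q) / 2 - f (wam a ((1 + t * (2 * \<nu> - 1)) / 2) b)"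
    and "D \<equiv> (1 - \<nu>) * f P + \<nu> * f Q - f (wam a \<nu> b)"
  shows "2 * min \<nu> (1 - \<nu>) * M \<le> D \<and> D \<le> 2 * max \<nu> (1 - \<nu>) * M"
proof -
  have J: "convex J" using f by (rule convex_on_imp_convex)
  have "P \<in> J" "Q \<in> J"
    using wam_mem_convex[OF J \<open>a \<in> J\<close> \<open>b \<in> J\<close>, of "\<nu> * t"]
      wam_mem_convex[OF J \<open>b \<in> J\<close> \<open>a \<in> J\<close>, of "(1 - \<nu>) * t"] \<nu> t
    by (auto simp: P_def Q_def mult_le_one)
  moreover have "(1 - \<nu>) * P + \<nu> * Q = wam a \<nu> b"
    by (simp add: P_def Q_def wam_def algebra_simps)
  moreover have "(P + Q) / 2 = wam a ((1 + t * (2 * \<nu> - 1)) / 2) b"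
    by (simp add: P_def Q_def wam_def field_simps)
  ultimately show ?thesis
    using convex_on_refined_jensen[OF f _ _ \<nu>, of P Q] by (simp add: M_def D_def)
qed

lemma Cfrak_integrands_integrable_on:
  assumes f: "convex_on J f" and "a \<in> J" "b \<in> J" "0 \<le> \<nu>" "\<nu> \<le> 1"
  shows "(\<lambda>t. f (wam a (\<nu> * t) b)) integrable_on {0..1}"
    and "(\<lambda>t. f (wam b ((1 - \<nu>) * t) a)) integrable_on {0..1}"
    and "(\<lambda>t. f (wam a ((1 + t * (2 * \<nu> - 1)) / 2) b)) integrable_on {0..1}"
proof -
  have J: "convex J" using f by (rule convex_on_imp_convex)
  have "wam a \<nu> b \<in> J" "wam b (1 - \<nu>) a \<in> J" "wam a (1/2) b \<in> J"
    using assms(2-5) by (auto intro: wam_mem_convex[OF J])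
  then have "(\<lambda>t. f (wam a t (wam a \<nu> b))) integrable_on {0..1}"
    "(\<lambda>t. f (wam b t (wam b (1 - \<nu>) a))) integrable_on {0..1}"
    "(\<lambda>t. f (wam (wam a (1/2) b) t (wam a \<nu> b))) integrable_on {0..1}"
    using convex_on_integrable_on_wam[OF f] assms(2,3) by simp_all
  moreover have "(\<lambda>t. f (wam a t (wam a \<nu> b))) = (\<lambda>t. f (wam a (\<nu> * t) b))"
    "(\<lambda>t. f (wam b t (wam b (1 - \<nu>) a))) = (\<lambda>t. f (wam b ((1 - \<nu>) * t) a))"
    by (simp_all add: wam_def algebra_simps)
  moreover have "(\<lambda>t. f (wam (wam a (1/2) b) t (wam a \<nu> b)))
      = (\<lambda>t. f (wam a ((1 + t * (2 * \<nu> - 1)) / 2) b))"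
    by (intro ext arg_cong[where f = f]) (simp add: wam_def field_simps)
  ultimately show "(\<lambda>t. f (wam a (\<nu> * t) b)) integrable_on {0..1}"
    "(\<lambda>t. f (wam b ((1 - \<nu>) * t) a)) integrable_on {0..1}"
    "(\<lambda>t. f (wam a ((1 + t * (2 * \<nu> - 1)) / 2) b)) integrable_on {0..1}"
    by simp_all
qed

theorem theorem2p11:
  fixes J :: "real set" and f :: "real \<Rightarrow> real" and a b \<nu> :: real
  assumes "is_interval J"
    and "convex_on J f"
    and "a \<in> J" and "b \<in> J"
    and "0 \<le> \<nu>" and "\<nu> \<le> 1"
  shows "2 * min \<nu> (1 - \<nu>) * Phi f \<nu> a b \<le> Cfrak f \<nu> a b - f (wam a \<nu> b)
       \<and> Cfrak f \<nu> a b - f (wam a \<nu> b) \<le> 2 * max \<nu> (1 - \<nu>) * Phi f \<nu> a b"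
proof -
  define h1 where "h1 t = f (wam a (\<nu> * t) b)" for t
  define h2 where "h2 t = f (wam b ((1 - \<nu>) * t) a)" for t
  define h3 where "h3 t = f (wam a ((1 + t * (2 * \<nu> - 1)) / 2) b)" for t
  have "h1 integrable_on {0..1}" "h2 integrable_on {0..1}" "h3 integrable_on {0..1}"
    using Cfrak_integrands_integrable_on[OF assms(2-6)] unfolding h1_def h2_def h3_def .
  then have Phi: "((\<lambda>t. (h1 t + h2 t) / 2 - h3 t) has_integral Phi f \<nu> a b) {0..1}"
    and Cfrak: "((\<lambda>t. (1 - \<nu>) * h1 t + \<nu> * h2 t - f (wam a \<nu> b))
                  has_integral Cfrak f \<nu> a b - f (wam a \<nu> b)) {0..1}"
    unfolding Phi_def Cfrak_def h1_def h2_def h3_def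
    by (auto intro!: integrable_integral integrable_diff integrable_add integrable_on_divide
        has_integral_diff has_integral_add has_integral_mult_right
        has_integral_const_real[of _ 0 1, simplified])
  show ?thesis
    using has_integral_le[OF has_integral_mult_right[OF Phi] Cfrak]
      has_integral_le[OF Cfrak has_integral_mult_right[OF Phi]]
      Cfrak_integrand_bounds[OF assms(2-6)]
    unfolding h1_def h2_def h3_def by auto
qed

end
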